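(* The unary unbiased black-box complexity of the $\mathrm{DLB}$ problem is $O(n^2)$.
   Context: Let $n$ be an even positive integer. For $x\in\{0,1\}^n$ consider the blocks $(x_{2\ell+1},x_{2\ell+2})$, $\ell=0,\dots,\frac n2-1$. If $x\neq(1,\dots,1)$, let $m$ be the smallest $\ell$ with $x_{2\ell+1}\neq 1$ or $x_{2\ell+2}\neq 1$, and define $\mathrm{DLB}(x)=2m+1$ if $x_{2m+1}+x_{2m+2}=0$ and $\mathrm{DLB}(x)=2m$ if $x_{2m+1}+x_{2m+2}=1$; set $\mathrm{DLB}(1,\dots,1)=n$. The $\mathrm{DLB}$ problem is to maximize $\mathrm{DLB}$. A unary unbiased variation operator $V$ assigns to each $x\in\{0,1\}^n$ a probability distribution $V(x)$ on $\{0,1\}^n$ such that for all $x,y,z$, $\Pr[y=V(x)]=\Pr[y\oplus z=V(x\oplus z)]$, and for all permutations $\sigma$ of $[1..n]$, $\Pr[y=V(x)]=\Pr[\sigma(y)=V(\sigma(x))]$, where $\sigma(x)=(x_{\sigma(1)},\dots,x_{\sigma(n)})$. A unary unbiased black-box algorithm generates $x^{(0)}$ uniformly at random; for $t=1,2,\dots$, based solely on $(f(x^{(0)}),\dots,f(x^{(t-1)}))$, it chooses a unary unbiased variation operator $V$ and an index $i\in[0..t-1]$ and samples $x^{(t)}\sim V(x^{(i)})$; each search point is evaluated when generated. The runtime is the number of fitness evaluations until (and including) the first evaluation of an optimum. The unary unbiased black-box complexity of $\mathrm{DLB}$ is the infimum over all such algorithms of the expected runtime on $\mathrm{DLB}$.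 *)

theory Defs
  imports "HOL-Probability.Probability_Mass_Function" "HOL-Combinatorics.Permutations"
begin

text \<open>Bit strings of length n are boolean lists (True = 1); position i (0-based) is bit i+1.\<close>

definition bitstrings :: "nat \<Rightarrow> bool list set" where
  "bitstrings n = {xs. length xs = n}"

definition xor_bits :: "bool list \<Rightarrow> bool list \<Rightarrow> bool list" where
  "xor_bits x z = map2 (\<noteq>) x z"

definition perm_bits :: "nat \<Rightarrow> (nat \<Rightarrow> nat) \<Rightarrow> bool list \<Rightarrow> bool list" where
  "perm_bits n \<sigma> x = map (\<lambda>i. x ! \<sigma> i) [0..<n]"

definition dlb :: "nat \<Rightarrow> bool list \<Rightarrow> nat" where
  "dlb n x = (if x = replicate n True then n
     else (let m = (LEAST l. l < n div 2 \<and> \<not> (x ! (2*l) \<and> x ! (2*l+1)))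
           in if \<not> x ! (2*m) \<and> \<not> x ! (2*m+1) then 2*m+1 else 2*m))"

definition unary_unbiased :: "nat \<Rightarrow> (bool list \<Rightarrow> bool list pmf) \<Rightarrow> bool" where
  "unary_unbiased n V \<longleftrightarrow>
     (\<forall>x\<in>bitstrings n. set_pmf (V x) \<subseteq> bitstrings n) \<and>
     (\<forall>x\<in>bitstrings n. \<forall>y\<in>bitstrings n. \<forall>z\<in>bitstrings n.
        pmf (V x) y = pmf (V (xor_bits x z)) (xor_bits y z)) \<and>
     (\<forall>\<sigma>. \<sigma> permutes {0..<n} \<longrightarrow> (\<forall>x\<in>bitstrings n. \<forall>y\<in>bitstrings n.
        pmf (V x) y = pmf (V (perm_bits n \<sigma> x)) (perm_bits n \<sigma> y)))"

text \<open>A unary unbiased black-box algorithm: given the fitness history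
  (f(x0), ..., f(x(t-1))), it (randomly) chooses an operator and an index i < t.\<close>
type_synonym algorithm = "nat list \<Rightarrow> ((bool list \<Rightarrow> bool list pmf) \<times> nat) pmf"

definition valid_algorithm :: "nat \<Rightarrow> algorithm \<Rightarrow> bool" where
  "valid_algorithm n A \<longleftrightarrow>
     (\<forall>h. h \<noteq> [] \<longrightarrow> (\<forall>(V, i) \<in> set_pmf (A h). unary_unbiased n V \<and> i < length h))"

text \<open>Distribution of the first k+1 search points (x0, ..., xk).\<close>
primrec run :: "nat \<Rightarrow> (bool list \<Rightarrow> nat) \<Rightarrow> algorithm \<Rightarrow> nat \<Rightarrow> bool list list pmf" where
  "run n f A 0 = map_pmf (\<lambda>x. [x]) (pmf_of_set (bitstrings n))"
| "run n f A (Suc k) = bind_pmf (run n f A k) (\<lambda>xs.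
      bind_pmf (A (map f xs)) (\<lambda>(V, i). map_pmf (\<lambda>y. xs @ [y]) (V (xs ! i))))"

definition is_optimum :: "nat \<Rightarrow> (bool list \<Rightarrow> nat) \<Rightarrow> bool list \<Rightarrow> bool" where
  "is_optimum n f x \<longleftrightarrow> x \<in> bitstrings n \<and> (\<forall>y\<in>bitstrings n. f y \<le> f x)"

text \<open>Expected runtime E[T] = sum over t \<ge> 0 of Pr[T > t], where T > t iff none of
  x0..xt is an optimum (tail-sum formula; equals infinity if T = infinity with positive probability).\<close>
definition expected_runtime :: "nat \<Rightarrow> (bool list \<Rightarrow> nat) \<Rightarrow> algorithm \<Rightarrow> ennreal" where
  "expected_runtime n f A =
     (\<Sum>t. ennreal (measure_pmf.prob (run n f A t) {xs. \<forall>x\<in>set xs. \<not> is_optimum n f x}))"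

definition unary_unbiased_bbc :: "nat \<Rightarrow> (bool list \<Rightarrow> nat) \<Rightarrow> ennreal" where
  "unary_unbiased_bbc n f = (INF A \<in> {A. valid_algorithm n A}. expected_runtime n f A)"

end

(* The algorithm is randomised local search: flip one uniformly random bit of the current point,
   where the current point is the newest point maximising the number of leading 11-blocks
   (DLB div 2). Bit flips form a unary unbiased operator, and the current point is determined by
   the fitness history alone.

   Let l be the first block of the current point that is not 11, and take the potential
   3n (n/2 - l) + n [block l is 00]. Flips left of block l are rejected and flips right of it
   change nothing. Within block l, a 00 becomes 01 or 10 (potential -n each), while a 10 or 01
   becomes 00 (+n) or 11 (at least -2n). Summed over the n flips the potential thus drops by at
   least n, i.e. by at least 1 in expectation per step, and by additive drift the expected runtime
   is at most the initial potential, which is at most 3n^2/2 + n. *)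

theory Submission
  imports Defs
begin

lemma set_pmf_of_set_lessThan: "(n::nat) > 0 \<Longrightarrow> set_pmf (pmf_of_set {..<n}) = {..<n}"
  by (rule set_pmf_of_set) auto

lemma pmf_map_pmf_inj_on:
  assumes "inj_on f A" "set_pmf M \<subseteq> A" "y \<in> A"
  shows "pmf (map_pmf f M) (f y) = pmf M y"
proof (cases "y \<in> set_pmf M")
  case True
  then show ?thesis
    by (rule pmf_map_inj[OF inj_on_subset[OF assms(1,2)]])
next
  case False
  then have "f y \<notin> f ` set_pmf M"
    using assms by (auto dest: inj_onD)
  then show ?thesis
    using False by (simp add: pmf_map_outside set_pmf_iff)
qed

lemma ennreal_of_nat_div_add_one_le:
  fixes S P n :: nat
  assumes "S + n \<le> n * P" "n > 0"
  shows "of_nat S / of_nat n + 1 \<le> (of_nat P :: ennreal)"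
proof -
  have "real S + real n \<le> real n * real P"
    using assms(1) by (metis of_nat_add of_nat_le_iff of_nat_mult)
  then have "real S / real n + 1 \<le> real P"
    using assms(2) by (simp add: field_simps)
  have "of_nat S / of_nat n + 1 = ennreal (real S / real n + 1)"
    using assms(2) by (simp add: ennreal_of_nat_eq_real_of_nat divide_ennreal ennreal_plus)
  also have "\<dots> \<le> ennreal (real P)"
    using \<open>real S / real n + 1 \<le> real P\<close> by (rule ennreal_leI)
  finally show ?thesis
    by (simp add: ennreal_of_nat_eq_real_of_nat)
qed

lemma suminf_prob_le_initial_potential:
  fixes R :: "nat \<Rightarrow> 'a pmf" and K :: "'a \<Rightarrow> 'a pmf" and \<Phi> :: "'a \<Rightarrow> ennreal"
  assumes R_Suc: "\<And>k. R (Suc k) = R k \<bind> K"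
    and drift: "\<And>k s. s \<in> set_pmf (R k) \<Longrightarrow> (\<integral>\<^sup>+s'. \<Phi> s' \<partial>K s) + indicator S s \<le> \<Phi> s"
  shows "(\<Sum>t. ennreal (measure_pmf.prob (R t) S)) \<le> (\<integral>\<^sup>+s. \<Phi> s \<partial>R 0)"
proof -
  have step: "(\<integral>\<^sup>+s. \<Phi> s \<partial>R (Suc k)) + ennreal (measure_pmf.prob (R k) S) \<le> (\<integral>\<^sup>+s. \<Phi> s \<partial>R k)" for k
  proof -
    have "(\<integral>\<^sup>+s. \<Phi> s \<partial>R (Suc k)) + ennreal (measure_pmf.prob (R k) S)
        = (\<integral>\<^sup>+s. (\<integral>\<^sup>+s'. \<Phi> s' \<partial>K s) + indicator S s \<partial>R k)"
      by (simp add: R_Suc nn_integral_add measure_pmf.emeasure_eq_measure[symmetric])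
    also have "\<dots> \<le> (\<integral>\<^sup>+s. \<Phi> s \<partial>R k)"
      using drift by (intro nn_integral_mono_AE AE_pmfI)
    finally show ?thesis .
  qed
  have partial: "(\<Sum>t<k. ennreal (measure_pmf.prob (R t) S)) + (\<integral>\<^sup>+s. \<Phi> s \<partial>R k) \<le> (\<integral>\<^sup>+s. \<Phi> s \<partial>R 0)" for k
  proof (induction k)
    case (Suc k)
    have "(\<Sum>t<Suc k. ennreal (measure_pmf.prob (R t) S)) + (\<integral>\<^sup>+s. \<Phi> s \<partial>R (Suc k))
        = (\<Sum>t<k. ennreal (measure_pmf.prob (R t) S))
          + ((\<integral>\<^sup>+s. \<Phi> s \<partial>R (Suc k)) + ennreal (measure_pmf.prob (R k) S))"
      by (simp add: ac_simps)
    also have "\<dots> \<le> (\<Sum>t<k. ennreal (measure_pmf.prob (R t) S)) + (\<integral>\<^sup>+s. \<Phi> s \<partial>R k)"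
      by (rule add_left_mono[OF step])
    finally show ?case
      using Suc.IH by (rule order_trans)
  qed simp
  show ?thesis
    using order_trans[OF add_increasing2[OF zero_le order_refl] partial]
    by (intro suminf_le_const summableI)
qed

definition flip_bit :: "nat \<Rightarrow> bool list \<Rightarrow> bool list" where
  "flip_bit p x = x[p := \<not> x ! p]"

lemma length_flip_bit [simp]: "length (flip_bit p x) = length x"
  by (simp add: flip_bit_def)

lemma nth_flip_bit: "i < length x \<Longrightarrow> flip_bit p x ! i = (if i = p then \<not> x ! i else x ! i)"
  by (simp add: flip_bit_def nth_list_update)

lemma nth_flip_bit_other: "i \<noteq> p \<Longrightarrow> flip_bit p x ! i = x ! i"
  by (simp add: flip_bit_def)

definition ones_prefix :: "bool list \<Rightarrow> nat \<Rightarrow> bool" where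
  "ones_prefix x l \<longleftrightarrow> (\<forall>k<l. x ! (2*k) \<and> x ! (2*k+1))"

lemma ones_prefix_flip_bit: "ones_prefix x l \<Longrightarrow> 2*l \<le> p \<Longrightarrow> ones_prefix (flip_bit p x) l"
  by (simp add: ones_prefix_def nth_flip_bit_other)

lemma ones_prefix_nth:
  assumes "ones_prefix x l" "i < 2*l"
  shows "x ! i"
proof -
  have "x ! (2*(i div 2)) \<and> x ! (2*(i div 2)+1)"
    using assms unfolding ones_prefix_def by auto
  moreover have "i = 2*(i div 2) \<or> i = 2*(i div 2)+1" by presburger
  ultimately show ?thesis by metis
qed

lemma dlb_replicate_True [simp]: "dlb n (replicate n True) = n"
  by (simp add: dlb_def)

lemma dlb_first_block:
  assumes "length x = n" "even n" "l < n div 2"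
    and "ones_prefix x l" and "\<not> (x!(2*l) \<and> x!(2*l+1))"
  shows "dlb n x = (if \<not> x!(2*l) \<and> \<not> x!(2*l+1) then 2*l+1 else 2*l)"
proof -
  have "x \<noteq> replicate n True"
    using assms by auto
  moreover have "(LEAST k. k < n div 2 \<and> \<not> (x!(2*k) \<and> x!(2*k+1))) = l"
    using assms(3-5) unfolding ones_prefix_def by (intro Least_equality) (auto simp: not_less)
  ultimately show ?thesis
    by (simp add: dlb_def Let_def)
qed

lemma first_block_cases:
  assumes "length x = n" "even n"
  obtains (ones) "x = replicate n True"
    | (block) l where "l < n div 2" "ones_prefix x l" "\<not> (x!(2*l) \<and> x!(2*l+1))"
proof (cases "\<exists>l<n div 2. \<not> (x!(2*l) \<and> x!(2*l+1))")
  case True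
  then obtain l where "l < n div 2" "\<not> (x!(2*l) \<and> x!(2*l+1))"
    and "\<forall>k<l. \<not> (k < n div 2 \<and> \<not> (x!(2*k) \<and> x!(2*k+1)))"
    using exists_least_iff[of "\<lambda>l. l < n div 2 \<and> \<not> (x!(2*l) \<and> x!(2*l+1))"] by blast
  then show ?thesis
    using block unfolding ones_prefix_def by (meson order.strict_trans)
next
  case False
  then have "ones_prefix x (n div 2)"
    unfolding ones_prefix_def by blast
  then have "x ! i" if "i < n" for i
    using ones_prefix_nth that \<open>even n\<close> by fastforce
  then show ?thesis
    using ones assms(1) by (simp add: list_eq_iff_nth_eq)
qed

lemma dlb_less:
  assumes "length x = n" "even n" "x \<noteq> replicate n True"
  shows "dlb n x < n"
  using assms(1,2)
proof (cases rule: first_block_cases)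
  case (block l)
  then show ?thesis using dlb_first_block[OF assms(1,2) block] assms(2) by auto
qed (use assms(3) in simp)

lemma is_optimum_dlb_iff:
  assumes "even n" "x \<in> bitstrings n"
  shows "is_optimum n (dlb n) x \<longleftrightarrow> x = replicate n True"
proof -
  have "replicate n True \<in> bitstrings n"
    by (simp add: bitstrings_def)
  moreover have "dlb n y \<le> n" if "y \<in> bitstrings n" for y
    using dlb_less[of y n] that assms(1) by (cases "y = replicate n True") (auto simp: bitstrings_def)
  moreover have "dlb n x < n" if "x \<noteq> replicate n True"
    using dlb_less[of x n] that assms by (simp add: bitstrings_def)
  ultimately show ?thesis
    using assms(2) unfolding is_optimum_def by (metis dlb_replicate_True not_le)
qed

(* dlb_level n x is the number of leading 11-blocks of x, also when x is all ones. *)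

definition dlb_level :: "nat \<Rightarrow> bool list \<Rightarrow> nat" where
  "dlb_level n x = dlb n x div 2"

lemma dlb_level_le_zero_bit:
  assumes "length y = n" "even n" "i < n" "\<not> y ! i"
  shows "dlb_level n y \<le> i div 2"
  using assms(1,2)
proof (cases rule: first_block_cases)
  case ones
  then show ?thesis using assms by simp
next
  case (block l)
  have "\<not> i < 2*l"
    using ones_prefix_nth[OF block(2), of i] assms(4) by blast
  then have "l \<le> i div 2"
    by presburger
  then show ?thesis
    using dlb_first_block[OF assms(1,2) block] by (simp add: dlb_level_def)
qed

definition dlb_potential :: "nat \<Rightarrow> bool list \<Rightarrow> nat" where
  "dlb_potential n x = 3*n*(n div 2 - dlb_level n x) + (if odd (dlb n x) then n else 0)"

lemma dlb_potential_le: "dlb_potential n x \<le> 3*n*(n div 2) + n"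
  unfolding dlb_potential_def by (intro add_mono mult_le_mono) auto

lemma dlb_potential_ones_prefix:
  assumes "length y = n" "even n" "l < n div 2" "ones_prefix y l"
  shows "if y!(2*l) \<and> y!(2*l+1)
         then l < dlb_level n y \<and> dlb_potential n y + 2*n \<le> 3*n*(n div 2 - l)
         else dlb_level n y = l \<and>
           dlb_potential n y = 3*n*(n div 2 - l) + (if \<not> y!(2*l) \<and> \<not> y!(2*l+1) then n else 0)"
proof (cases "y!(2*l) \<and> y!(2*l+1)")
  case True
  have "l < dlb_level n y"
    using assms(1,2)
  proof (cases rule: first_block_cases)
    case ones
    then show ?thesis using assms(3) by (simp add: dlb_level_def)
  next
    case (block l')
    have "ones_prefix y (Suc l)"
      using assms(4) True by (auto simp: ones_prefix_def less_Suc_eq)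
    then have "l < l'"
      using block(3) by (auto simp: ones_prefix_def not_less_eq[symmetric])
    then show ?thesis
      using dlb_first_block[OF assms(1,2) block] by (simp add: dlb_level_def)
  qed
  moreover obtain d where "n div 2 - l = Suc d"
    using assms(3) by (metis Suc_diff_Suc)
  ultimately have "n div 2 - dlb_level n y \<le> d"
    by linarith
  then have "3*n*(n div 2 - dlb_level n y) \<le> 3*n*d"
    by (rule mult_le_mono2)
  moreover have "dlb_potential n y \<le> 3*n*(n div 2 - dlb_level n y) + n"
    by (simp add: dlb_potential_def)
  ultimately have "dlb_potential n y \<le> 3*n*d + n"
    by linarith
  then have "dlb_potential n y + 2*n \<le> 3*n*(n div 2 - l)"
    unfolding \<open>n div 2 - l = Suc d\<close> by simp
  with True \<open>l < dlb_level n y\<close> show ?thesis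
    by simp
next
  case False
  then show ?thesis
    using dlb_first_block[OF assms False] by (auto simp: dlb_level_def dlb_potential_def)
qed

definition elitist_select :: "nat \<Rightarrow> bool list \<Rightarrow> bool list \<Rightarrow> bool list" where
  "elitist_select n x y = (if dlb_level n x \<le> dlb_level n y then y else x)"

lemma dlb_potential_select_flip_outside_block:
  assumes "length x = n" "even n" "l < n div 2" "ones_prefix x l" "\<not> (x!(2*l) \<and> x!(2*l+1))"
    and "p < n" "p \<notin> {2*l, 2*l+1}"
  shows "dlb_potential n (elitist_select n x (flip_bit p x)) = dlb_potential n x"
proof (cases "p < 2*l")
  case True
  then have "\<not> flip_bit p x ! p"
    using ones_prefix_nth[OF assms(4)] assms(1,6) by (simp add: nth_flip_bit)
  then have "dlb_level n (flip_bit p x) < dlb_level n x"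
    using dlb_level_le_zero_bit[of "flip_bit p x" n p] dlb_first_block[OF assms(1-5)] assms True
    by (auto simp: dlb_level_def)
  then show ?thesis
    by (simp add: elitist_select_def)
next
  case False
  then have "2*l+1 < p"
    using assms(7) by auto
  then have "ones_prefix (flip_bit p x) l" "flip_bit p x ! (2*l) = x ! (2*l)"
    "flip_bit p x ! (2*l+1) = x ! (2*l+1)"
    using assms(4) by (simp_all add: ones_prefix_flip_bit nth_flip_bit_other)
  then have "dlb n (flip_bit p x) = dlb n x"
    using dlb_first_block[of "flip_bit p x" n l] dlb_first_block[OF assms(1-5)] assms(1-3,5) by simp
  then show ?thesis
    by (simp add: elitist_select_def dlb_level_def dlb_potential_def)
qed

lemma dlb_potential_select_flip_in_block:
  assumes "length x = n" "even n" "l < n div 2" "ones_prefix x l" "\<not> (x!(2*l) \<and> x!(2*l+1))"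
  shows "dlb_potential n (elitist_select n x (flip_bit (2*l) x))
       + dlb_potential n (elitist_select n x (flip_bit (2*l+1) x)) + n \<le> 2 * dlb_potential n x"
proof -
  define B where "B = 3*n*(n div 2 - l)"
  define P where "P q = dlb_potential n (elitist_select n x (flip_bit q x))" for q
  have lt: "2*l+1 < n"
    using assms(2,3) by auto
  have x: "dlb_level n x = l" "dlb_potential n x = B + (if \<not> x!(2*l) \<and> \<not> x!(2*l+1) then n else 0)"
    using dlb_potential_ones_prefix[OF assms(1-4)] assms(5) unfolding B_def by simp_all
  have flip: "if y!(2*l) \<and> y!(2*l+1) then P q + 2*n \<le> B
      else P q = B + (if \<not> y!(2*l) \<and> \<not> y!(2*l+1) then n else 0)"
    if "y = flip_bit q x" "q \<in> {2*l, 2*l+1}" for y q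
  proof -
    have "length y = n" "ones_prefix y l"
      using that assms(1,4) by (auto intro: ones_prefix_flip_bit)
    from dlb_potential_ones_prefix[OF this(1) assms(2,3) this(2)] show ?thesis
      unfolding P_def B_def elitist_select_def x(1) that(1)[symmetric]
      by (cases "y!(2*l) \<and> y!(2*l+1)") auto
  qed
  have bits: "flip_bit (2*l) x ! (2*l) = (\<not> x!(2*l))" "flip_bit (2*l) x ! (2*l+1) = x!(2*l+1)"
    "flip_bit (2*l+1) x ! (2*l) = x!(2*l)" "flip_bit (2*l+1) x ! (2*l+1) = (\<not> x!(2*l+1))"
    using lt assms(1) by (simp_all add: nth_flip_bit nth_flip_bit_other)
  note flip_l = flip[OF refl, of "2*l", unfolded bits] and flip_r = flip[OF refl, of "2*l+1", unfolded bits]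
  consider "\<not> x!(2*l)" "\<not> x!(2*l+1)" | "x!(2*l)" "\<not> x!(2*l+1)" | "\<not> x!(2*l)" "x!(2*l+1)"
    using assms(5) by blast
  then have "P (2*l) + P (2*l+1) + n \<le> 2 * dlb_potential n x"
    by cases (use flip_l flip_r x(2) in auto)
  then show ?thesis
    unfolding P_def .
qed

lemma sum_dlb_potential_elitist_flip_le:
  assumes "length x = n" "even n" "x \<noteq> replicate n True"
  shows "(\<Sum>p<n. dlb_potential n (elitist_select n x (flip_bit p x))) + n \<le> n * dlb_potential n x"
  using assms(1,2)
proof (cases rule: first_block_cases)
  case (block l)
  define \<phi> where "\<phi> p = dlb_potential n (elitist_select n x (flip_bit p x))" for p
  have lt: "2*l+1 < n"
    using assms(2) block(1) by auto
  have split: "{..<n} = insert (2*l) (insert (2*l+1) ({..<n} - {2*l, 2*l+1}))"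
    using lt by auto
  have "(\<Sum>p<n. \<phi> p) = \<phi> (2*l) + \<phi> (2*l+1) + (\<Sum>p\<in>{..<n} - {2*l, 2*l+1}. \<phi> p)"
    by (subst split) simp
  also have "(\<Sum>p\<in>{..<n} - {2*l, 2*l+1}. \<phi> p) = (n - 2) * dlb_potential n x"
    using dlb_potential_select_flip_outside_block[OF assms(1,2) block] lt
    by (simp add: \<phi>_def card_Diff_subset numeral_2_eq_2)
  finally have "(\<Sum>p<n. \<phi> p) + n \<le> 2 * dlb_potential n x + (n - 2) * dlb_potential n x"
    using dlb_potential_select_flip_in_block[OF assms(1,2) block] unfolding \<phi>_def by linarith
  also have "\<dots> = (2 + (n - 2)) * dlb_potential n x"
    by (rule add_mult_distrib[symmetric])
  also have "2 + (n - 2) = n"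
    using lt by simp
  finally show ?thesis
    unfolding \<phi>_def .
qed (use assms(3) in simp)

definition rls_op :: "nat \<Rightarrow> bool list \<Rightarrow> bool list pmf" where
  "rls_op n x = map_pmf (\<lambda>p. flip_bit p x) (pmf_of_set {..<n})"

lemma set_pmf_rls_op: "n > 0 \<Longrightarrow> set_pmf (rls_op n x) = (\<lambda>p. flip_bit p x) ` {..<n}"
  by (simp add: rls_op_def set_pmf_of_set_lessThan)

lemma rls_op_equivariant:
  assumes "\<tau> permutes {..<n}" "n > 0" and commute: "\<And>p. p < n \<Longrightarrow> g (flip_bit (\<tau> p) x) = flip_bit p (g x)"
  shows "rls_op n (g x) = map_pmf g (rls_op n x)"
proof -
  have "{..<n} \<noteq> {}"
    using assms(2) by auto
  then have uniform: "map_pmf \<tau> (pmf_of_set {..<n}) = pmf_of_set {..<n}"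
    using map_pmf_of_set_inj[OF permutes_inj_on[OF assms(1)]] permutes_image[OF assms(1)] by simp
  have "map_pmf g (rls_op n x) = map_pmf (\<lambda>p. g (flip_bit p x)) (map_pmf \<tau> (pmf_of_set {..<n}))"
    unfolding uniform rls_op_def by (simp add: pmf.map_comp o_def)
  also have "\<dots> = map_pmf (\<lambda>p. g (flip_bit (\<tau> p) x)) (pmf_of_set {..<n})"
    by (simp add: pmf.map_comp o_def)
  also have "\<dots> = rls_op n (g x)"
    unfolding rls_op_def using commute by (intro map_pmf_cong) (simp_all add: set_pmf_of_set_lessThan assms(2))
  finally show ?thesis
    by (rule sym)
qed

lemma pmf_rls_op_equivariant:
  assumes "\<tau> permutes {..<n}" "n > 0" "inj_on g (bitstrings n)" "x \<in> bitstrings n" "y \<in> bitstrings n"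
    and "\<And>p. p < n \<Longrightarrow> g (flip_bit (\<tau> p) x) = flip_bit p (g x)"
  shows "pmf (rls_op n (g x)) (g y) = pmf (rls_op n x) y"
proof -
  have "set_pmf (rls_op n x) \<subseteq> bitstrings n"
    using assms(2,4) by (auto simp: set_pmf_rls_op bitstrings_def)
  then show ?thesis
    using rls_op_equivariant[OF assms(1,2,6)] pmf_map_pmf_inj_on[OF assms(3) _ assms(5)] by simp
qed

lemma xor_bits_xor_bits: "length x = length z \<Longrightarrow> xor_bits (xor_bits x z) z = x"
  by (auto simp: xor_bits_def list_eq_iff_nth_eq)

lemma flip_bit_xor_bits: "length x = length z \<Longrightarrow> xor_bits (flip_bit p x) z = flip_bit p (xor_bits x z)"
  by (cases "p < length x") (auto simp: xor_bits_def flip_bit_def list_eq_iff_nth_eq nth_list_update)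

lemma perm_bits_inv:
  assumes "\<sigma> permutes {..<n}" "length x = n"
  shows "perm_bits n (inv \<sigma>) (perm_bits n \<sigma> x) = x"
  using assms permutes_in_image[OF permutes_inv[OF assms(1)]]
  by (auto simp: perm_bits_def list_eq_iff_nth_eq permutes_inverses(1))

lemma perm_bits_flip_bit:
  assumes "\<sigma> permutes {..<n}" "length x = n" "p < n"
  shows "perm_bits n \<sigma> (flip_bit (\<sigma> p) x) = flip_bit p (perm_bits n \<sigma> x)"
  using assms permutes_in_image[OF assms(1)] permutes_inj[OF assms(1)]
  by (auto simp: perm_bits_def list_eq_iff_nth_eq nth_flip_bit dest: injD)

lemma unary_unbiased_rls_op:
  assumes "n > 0"
  shows "unary_unbiased n (rls_op n)"
  unfolding unary_unbiased_def
proof (intro conjI ballI allI impI)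
  fix x assume "x \<in> bitstrings n"
  then show "set_pmf (rls_op n x) \<subseteq> bitstrings n"
    using assms by (auto simp: set_pmf_rls_op bitstrings_def)
next
  fix x y z assume "x \<in> bitstrings n" "y \<in> bitstrings n" "z \<in> bitstrings n"
  moreover have "inj_on (\<lambda>w. xor_bits w z) (bitstrings n)"
    using \<open>z \<in> bitstrings n\<close> by (intro inj_on_inverseI[of _ "\<lambda>w. xor_bits w z"])
      (simp add: bitstrings_def xor_bits_xor_bits)
  ultimately show "pmf (rls_op n x) y = pmf (rls_op n (xor_bits x z)) (xor_bits y z)"
    using pmf_rls_op_equivariant[OF permutes_id assms, of "\<lambda>w. xor_bits w z"]
    by (simp add: bitstrings_def flip_bit_xor_bits)
next
  fix \<sigma> x y assume "\<sigma> permutes {0..<n}" "x \<in> bitstrings n" "y \<in> bitstrings n"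
  moreover from this(1) have \<sigma>: "\<sigma> permutes {..<n}"
    by (simp add: atLeast0LessThan)
  moreover have "inj_on (perm_bits n \<sigma>) (bitstrings n)"
    using perm_bits_inv[OF \<sigma>] by (intro inj_on_inverseI) (simp add: bitstrings_def)
  ultimately show "pmf (rls_op n x) y = pmf (rls_op n (perm_bits n \<sigma> x)) (perm_bits n \<sigma> y)"
    using pmf_rls_op_equivariant[OF \<sigma> assms, of "perm_bits n \<sigma>"]
    by (simp add: bitstrings_def perm_bits_flip_bit)
qed

(* Position of the newest entry of maximal v div 2 in a fitness history; the history is
   read newest-first, so that appending an entry is a recursion step. *)
primrec elitist_index_rev :: "nat list \<Rightarrow> nat" where
  "elitist_index_rev [] = 0"
| "elitist_index_rev (v # r) =
    (if r = [] then 0 else if rev r ! elitist_index_rev r div 2 \<le> v div 2 then length r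
     else elitist_index_rev r)"

definition elitist_index :: "nat list \<Rightarrow> nat" where
  "elitist_index h = elitist_index_rev (rev h)"

lemma elitist_index_less:
  assumes "h \<noteq> []"
  shows "elitist_index h < length h"
proof -
  have "r \<noteq> [] \<Longrightarrow> elitist_index_rev r < length r" for r
    by (induction r) auto
  from this[of "rev h"] assms show ?thesis
    by (simp add: elitist_index_def)
qed

lemma elitist_index_snoc:
  "h \<noteq> [] \<Longrightarrow> elitist_index (h @ [v]) =
     (if h ! elitist_index h div 2 \<le> v div 2 then length h else elitist_index h)"
  by (simp add: elitist_index_def)

definition elitist_rls :: "nat \<Rightarrow> algorithm" where
  "elitist_rls n h = return_pmf (rls_op n, elitist_index h)"

lemma valid_algorithm_elitist_rls: "n > 0 \<Longrightarrow> valid_algorithm n (elitist_rls n)"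
  by (simp add: valid_algorithm_def elitist_rls_def unary_unbiased_rls_op elitist_index_less)

definition current_point :: "nat \<Rightarrow> bool list list \<Rightarrow> bool list" where
  "current_point n xs = xs ! elitist_index (map (dlb n) xs)"

lemma current_point_in_set: "xs \<noteq> [] \<Longrightarrow> current_point n xs \<in> set xs"
  using elitist_index_less[of "map (dlb n) xs"] by (simp add: current_point_def)

lemma current_point_snoc:
  "xs \<noteq> [] \<Longrightarrow> current_point n (xs @ [y]) = elitist_select n (current_point n xs) y"
  using elitist_index_less[of "map (dlb n) xs"]
  by (simp add: current_point_def elitist_select_def dlb_level_def elitist_index_snoc nth_append)

lemma run_elitist_rls_Suc:
  "run n (dlb n) (elitist_rls n) (Suc k) =
     run n (dlb n) (elitist_rls n) k \<bind> (\<lambda>xs. map_pmf (\<lambda>y. xs @ [y]) (rls_op n (current_point n xs)))"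
  by (simp add: elitist_rls_def current_point_def bind_return_pmf)

lemma set_pmf_run_elitist_rls:
  assumes "n > 0" "xs \<in> set_pmf (run n (dlb n) (elitist_rls n) k)"
  shows "length xs = Suc k \<and> set xs \<subseteq> bitstrings n"
  using assms(2)
proof (induction k arbitrary: xs)
  case 0
  have "finite (bitstrings n)"
    using finite_lists_length_eq[of "UNIV :: bool set" n] by (simp add: bitstrings_def)
  moreover have "bitstrings n \<noteq> {}"
    by (auto simp: bitstrings_def intro: exI[of _ "replicate n True"])
  ultimately show ?case
    using 0 by auto
next
  case (Suc k)
  obtain ys y where ys: "ys \<in> set_pmf (run n (dlb n) (elitist_rls n) k)"
    and y: "y \<in> set_pmf (rls_op n (current_point n ys))" and xs: "xs = ys @ [y]"
    using Suc.prems unfolding run_elitist_rls_Suc by auto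
  have len: "length ys = Suc k" and bits: "set ys \<subseteq> bitstrings n"
    using Suc.IH[OF ys] by auto
  then have "current_point n ys \<in> bitstrings n"
    using current_point_in_set[of ys n] by fastforce
  then have "y \<in> bitstrings n"
    using y assms(1) by (auto simp: set_pmf_rls_op bitstrings_def)
  then show ?case
    using xs len bits by simp
qed

definition unsolved :: "nat \<Rightarrow> bool list list set" where
  "unsolved n = {xs. \<forall>x\<in>set xs. \<not> is_optimum n (dlb n) x}"

definition history_potential :: "nat \<Rightarrow> bool list list \<Rightarrow> ennreal" where
  "history_potential n xs =
     (if replicate n True \<in> set xs then 0 else of_nat (dlb_potential n (current_point n xs)))"

lemma history_potential_drift:
  assumes "even n" "n > 0" "xs \<noteq> []" "set xs \<subseteq> bitstrings n"
  shows "(\<integral>\<^sup>+y. history_potential n (xs @ [y]) \<partial>rls_op n (current_point n xs))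
           + indicator (unsolved n) xs \<le> history_potential n xs"
proof (cases "replicate n True \<in> set xs")
  case True
  then have "xs \<notin> unsolved n"
    using is_optimum_dlb_iff[OF assms(1), of "replicate n True"] by (auto simp: unsolved_def bitstrings_def)
  with True show ?thesis
    by (simp add: history_potential_def)
next
  case False
  define x where "x = current_point n xs"
  have "x \<in> set xs"
    using current_point_in_set[OF assms(3)] by (simp add: x_def)
  then have x: "length x = n" "x \<noteq> replicate n True"
    using assms(4) False by (auto simp: bitstrings_def)
  have "xs \<in> unsolved n"
    using False assms(4) is_optimum_dlb_iff[OF assms(1)] by (force simp: unsolved_def)
  have "(\<integral>\<^sup>+y. history_potential n (xs @ [y]) \<partial>rls_op n x)
      \<le> (\<integral>\<^sup>+y. of_nat (dlb_potential n (elitist_select n x y)) \<partial>rls_op n x)"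
    using current_point_snoc[OF assms(3)]
    by (intro nn_integral_mono) (simp add: history_potential_def x_def)
  also have "\<dots> = of_nat (\<Sum>p<n. dlb_potential n (elitist_select n x (flip_bit p x))) / of_nat n"
    using assms(2) unfolding rls_op_def nn_integral_map_pmf by (subst nn_integral_pmf_of_set) auto
  finally have "(\<integral>\<^sup>+y. history_potential n (xs @ [y]) \<partial>rls_op n x) + indicator (unsolved n) xs
      \<le> of_nat (\<Sum>p<n. dlb_potential n (elitist_select n x (flip_bit p x))) / of_nat n + 1"
    using \<open>xs \<in> unsolved n\<close> by (simp add: add_right_mono)
  also have "\<dots> \<le> of_nat (dlb_potential n x)"
    using sum_dlb_potential_elitist_flip_le[OF x(1) assms(1) x(2)] assms(2) by (rule ennreal_of_nat_div_add_one_le)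
  finally show ?thesis
    using False by (simp add: history_potential_def x_def)
qed

lemma expected_runtime_elitist_rls:
  assumes "even n" "n > 0"
  shows "expected_runtime n (dlb n) (elitist_rls n) \<le> of_nat (3*n*(n div 2) + n)"
proof -
  have "expected_runtime n (dlb n) (elitist_rls n)
      \<le> (\<integral>\<^sup>+xs. history_potential n xs \<partial>run n (dlb n) (elitist_rls n) 0)"
    unfolding expected_runtime_def unsolved_def[symmetric]
  proof (rule suminf_prob_le_initial_potential[where R = "run n (dlb n) (elitist_rls n)", OF run_elitist_rls_Suc])
    fix k xs
    assume "xs \<in> set_pmf (run n (dlb n) (elitist_rls n) k)"
    with set_pmf_run_elitist_rls[OF assms(2)] have "xs \<noteq> []" "set xs \<subseteq> bitstrings n"
      by fastforce+
    then show "(\<integral>\<^sup>+s. history_potential n s \<partial>map_pmf (\<lambda>y. xs @ [y]) (rls_op n (current_point n xs)))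
        + indicator (unsolved n) xs \<le> history_potential n xs"
      using history_potential_drift[OF assms] by simp
  qed
  also have "\<dots> \<le> (\<integral>\<^sup>+xs. of_nat (3*n*(n div 2) + n) \<partial>run n (dlb n) (elitist_rls n) 0)"
    using dlb_potential_le by (intro nn_integral_mono) (simp add: history_potential_def del: of_nat_add)
  also have "\<dots> = of_nat (3*n*(n div 2) + n)"
    by (simp add: measure_pmf.emeasure_space_1 del: of_nat_add)
  finally show ?thesis .
qed

theorem lemma10:
  shows "\<exists>C::real. C > 0 \<and> (\<exists>N. \<forall>n\<ge>N. even n \<longrightarrow>
           unary_unbiased_bbc n (dlb n) \<le> ennreal (C * (real n)^2))"
proof (intro exI conjI allI impI)
  show "(2::real) > 0"
    by simp
  fix n :: nat
  assume "n \<ge> 1" "even n"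
  then obtain m where m: "n = 2*m" "m \<ge> 1"
    by (auto elim: evenE)
  have "unary_unbiased_bbc n (dlb n) \<le> expected_runtime n (dlb n) (elitist_rls n)"
    unfolding unary_unbiased_bbc_def using valid_algorithm_elitist_rls m by (auto intro: INF_lower)
  also have "\<dots> \<le> of_nat (3*n*(n div 2) + n)"
    using m by (intro expected_runtime_elitist_rls \<open>even n\<close>) simp
  also have "of_nat (3*n*(n div 2) + n) = ennreal (real (3*n*(n div 2) + n))"
    by (rule ennreal_of_nat_eq_real_of_nat)
  also have "\<dots> \<le> ennreal (real (2 * n^2))"
    using m by (intro ennreal_leI) (simp add: power2_eq_square algebra_simps)
  also have "real (2 * n^2) = 2 * (real n)^2"
    by simp
  finally show "unary_unbiased_bbc n (dlb n) \<le> ennreal (2 * (real n)^2)" .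
qed

end
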